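(* Let $0\le k\le n$ and $\sigma\in\mathcal D^B_k$. Then $$\sum_{\pi\in B_n,\ dp(\pi)=\sigma}(-1)^{\ell_B(\pi)}q^{\mathrm{fmaj}(\pi)}=(-1)^{\ell_B(\sigma)}q^{\mathrm{fmaj}(\sigma)}{n\brack k}_{q^2}.$$
   Context: $B_n$ is the set of words $\sigma=\sigma_1\cdots\sigma_n$ with $\sigma_i\in\{\pm1,\dots,\pm n\}$ and $|\sigma_1|\cdots|\sigma_n|$ a permutation of $[n]$; $\mathcal D^B_k$ is the set of $\sigma\in B_k$ with $\sigma_i\ne i$ for all $i$ ($\mathcal D^B_0$ is the empty word). $\mathrm{inv}(\sigma)=\#\{(i,j):i<j,\sigma_i>\sigma_j\}$ (usual order), $\ell_B(\sigma)=\mathrm{inv}(\sigma)-\sum_{i:\sigma_i<0}\sigma_i$. Order $\prec$ on nonzero integers: $-1\prec-2\prec\cdots\prec-N\prec1\prec2\prec\cdots\prec N$. For a word $w$ of distinct nonzero integers, $\mathrm{maj}_\prec(w)=\sum_{i:w_i\succ w_{i+1}}i$, $\mathrm{neg}(w)$ = number of negative letters, $\mathrm{fmaj}(w)=2\mathrm{maj}_\prec(w)+\mathrm{neg}(w)$. For a word $w$ of nonzero integers whose absolute values are distinct, say $a_1<\dots<a_m$, its reduction replaces each letter $\pm a_j$ by $\pm j$ (keeping the sign). For $\pi\in B_n$, $dp(\pi)$ is the reduction of the subword of letters $\pi_i$ with $\pi_i\ne i$. $[m]_x=1+x+\dots+x^{m-1}$, $[m]_x!=[1]_x\cdots[m]_x$,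 $[0]_x!=1$, ${n\brack k}_x=\frac{[n]_x!}{[k]_x![n-k]_x!}$. *)

theory Defs
  imports "HOL-Computational_Algebra.Polynomial"
begin

text \<open>Signed permutations are represented as integer lists (words), 0-indexed in Isabelle,
  but the paper's position i corresponds to list index i-1.\<close>

definition Bn :: "nat \<Rightarrow> int list set" where
  "Bn n = {w. length w = n \<and> distinct (map abs w) \<and> set (map abs w) = {1..int n}}"

definition DB :: "nat \<Rightarrow> int list set" where
  "DB k = {w \<in> Bn k. \<forall>i<k. w ! i \<noteq> int (i + 1)}"

definition inv :: "int list \<Rightarrow> nat" where
  "inv w = card {(i, j). i < j \<and> j < length w \<and> w ! i > w ! j}"

text \<open>ell_B(w) = inv(w) - sum of negative letters = inv(w) + sum of their absolute values.\<close>
definition ellB :: "int list \<Rightarrow> nat" where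
  "ellB w = inv w + (\<Sum>i\<in>{i. i < length w \<and> w ! i < 0}. nat (- (w ! i)))"

text \<open>The order -1 < -2 < ... < -N < 1 < 2 < ... < N.\<close>
definition precB :: "int \<Rightarrow> int \<Rightarrow> bool" where
  "precB a b = ((a < 0 \<and> b > 0) \<or> (a < 0 \<and> b < 0 \<and> b < a) \<or> (a > 0 \<and> b > 0 \<and> a < b))"

text \<open>maj: sum of (1-based) positions i with w_i succ w_(i+1).\<close>
definition majB :: "int list \<Rightarrow> nat" where
  "majB w = (\<Sum>i\<in>{i. 1 \<le> i \<and> i < length w \<and> precB (w ! i) (w ! (i - 1))}. i)"

definition neg :: "int list \<Rightarrow> nat" where
  "neg w = length (filter (\<lambda>x. x < 0) w)"

definition fmaj :: "int list \<Rightarrow> nat" where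
  "fmaj w = 2 * majB w + neg w"

text \<open>Reduction: a letter \<plusminus>a_j (a_j the j-th smallest absolute value) becomes \<plusminus>j.\<close>
definition red :: "int list \<Rightarrow> int list" where
  "red w = map (\<lambda>x. sgn x * int (card {y \<in> set (map abs w). y \<le> abs x})) w"

definition dp :: "int list \<Rightarrow> int list" where
  "dp w = red (map fst (filter (\<lambda>(x, i). x \<noteq> int (i + 1)) (zip w [0..<length w])))"

definition qint :: "nat \<Rightarrow> 'a::comm_semiring_1 \<Rightarrow> 'a" where
  "qint m x = (\<Sum>i<m. x ^ i)"

definition qfact :: "nat \<Rightarrow> 'a::comm_semiring_1 \<Rightarrow> 'a" where
  "qfact m x = (\<Prod>i\<in>{1..m}. qint i x)"

definition qbinom :: "nat \<Rightarrow> nat \<Rightarrow> 'a::idom_divide \<Rightarrow> 'a" where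
  "qbinom n k x = qfact n x div (qfact k x * qfact (n - k) x)"

end

theory Submission
  imports Defs
begin

text \<open>A signed permutation \<open>\<pi>\<close> with \<open>dp \<pi> = \<sigma>\<close> is determined by the positions of its fixed points,
  recorded as a boolean pattern with \<open>k\<close> moved and \<open>n - k\<close> fixed entries; conversely every such
  pattern arises, by filling the moved positions with the suitably relabelled letters of \<open>\<sigma>\<close>.
  Under this bijection \<open>neg \<pi> = neg \<sigma>\<close> and \<open>ellB \<pi> \<equiv> ellB \<sigma> (mod 2)\<close>, while the descents of
  \<open>\<pi>\<close> depend only on the pattern, the excedances and the descents of \<open>\<sigma>\<close>. Generating the patterns
  letter by letter gives a pair of recurrences for the major index sums. Since in a derangement
  an excedance followed by a non-excedance is a descent, and a non-excedance followed by an
  excedance an ascent, they are solved by \<open>q ^ (2 * majB \<sigma>)\<close> times the Gaussian binomial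
  coefficient in \<open>q\<^sup>2\<close>, through its two q-Pascal rules.\<close>

section \<open>Gaussian binomial coefficients\<close>

fun gbinom :: "nat \<Rightarrow> nat \<Rightarrow> 'a::comm_ring_1 \<Rightarrow> 'a" where
  "gbinom 0 m t = 1"
| "gbinom (Suc a) 0 t = 1"
| "gbinom (Suc a) (Suc m) t = gbinom a (Suc m) t + t ^ Suc a * gbinom (Suc a) m t"

lemma gbinom_0_right [simp]: "gbinom a 0 t = 1"
  by (cases a) auto

lemma qint_add: "qint (a + m) t = qint a t + t ^ a * qint m (t::'a::comm_semiring_1)"
  unfolding qint_def by (induction m) (simp_all add: algebra_simps power_add)

lemma qint_eq_geometric: "1 - t ^ m = (1 - t) * qint m (t::'a::comm_ring_1)"
  unfolding qint_def by (simp add: one_diff_power_eq)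

lemma qfact_0 [simp]: "qfact 0 t = 1"
  by (simp add: qfact_def)

lemma qfact_Suc: "qfact (Suc m) t = qfact m t * qint (Suc m) t"
  unfolding qfact_def by (simp add: atLeastAtMostSuc_conv mult.commute)

lemma gbinom_mult_qfact: "gbinom a m t * qfact a t * qfact m t = qfact (a + m) t"
proof (induction a m t rule: gbinom.induct)
  case (3 a m t)
  have "gbinom (Suc a) (Suc m) t * qfact (Suc a) t * qfact (Suc m) t
      = (gbinom a (Suc m) t * qfact a t * qfact (Suc m) t) * qint (Suc a) t
        + t ^ Suc a * (gbinom (Suc a) m t * qfact (Suc a) t * qfact m t) * qint (Suc m) t"
    by (simp add: qfact_Suc[of a] qfact_Suc[of m] algebra_simps)
  also have "\<dots> = qfact (a + Suc m) t * (qint (Suc a) t + t ^ Suc a * qint (Suc m) t)"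
    using "3" by (simp add: algebra_simps)
  also have "\<dots> = qfact (Suc a + Suc m) t"
    using qint_add[of "Suc a" "Suc m" t] qfact_Suc[of "a + Suc m" t] by simp
  finally show ?case .
qed simp_all

lemma qbinom_eq_gbinom:
  assumes "k \<le> n" and "qfact k t * qfact (n - k) t \<noteq> 0"
  shows "qbinom n k t = gbinom k (n - k) (t::'a::idom_divide)"
  unfolding qbinom_def using gbinom_mult_qfact[of k "n - k" t] assms
  by (metis le_add_diff_inverse mult.assoc nonzero_mult_div_cancel_right)

locale qfact_nonzero =
  fixes t :: "'a::idom"
  assumes qfact_nonzero: "qfact i t \<noteq> 0"
begin

lemma gbinom_Suc_Suc_alt:
  "gbinom (Suc a) (Suc m) t = gbinom (Suc a) m t + t ^ Suc m * gbinom a (Suc m) t"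
proof -
  have "gbinom (Suc a) (Suc m) t * (qfact (Suc a) t * qfact (Suc m) t) = qfact (Suc a + Suc m) t"
    using gbinom_mult_qfact[of "Suc a" "Suc m" t] by (simp add: mult.assoc)
  also have "\<dots> = qfact (Suc a + m) t * (qint (Suc m) t + t ^ Suc m * qint (Suc a) t)"
    using qfact_Suc[of "Suc a + m" t] qint_add[of "Suc m" "Suc a" t] by (simp add: ac_simps)
  also have "\<dots> = (gbinom (Suc a) m t * qfact (Suc a) t * qfact m t) * qint (Suc m) t
        + t ^ Suc m * (gbinom a (Suc m) t * qfact a t * qfact (Suc m) t) * qint (Suc a) t"
    using gbinom_mult_qfact[of "Suc a" m t] gbinom_mult_qfact[of a "Suc m" t]
    by (simp add: algebra_simps)
  also have "\<dots> = (gbinom (Suc a) m t + t ^ Suc m * gbinom a (Suc m) t)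
                  * (qfact (Suc a) t * qfact (Suc m) t)"
    by (simp add: qfact_Suc[of a] qfact_Suc[of m] algebra_simps)
  finally show ?thesis
    using qfact_nonzero by simp
qed

lemma gbinom_Suc_right_ratio:
  "(1 - t ^ Suc m) * gbinom a (Suc m) t = (1 - t ^ (a + Suc m)) * gbinom a m t"
proof -
  have "(1 - t ^ Suc m) * gbinom a (Suc m) t * (qfact a t * qfact (Suc m) t)
        = (1 - t ^ Suc m) * qfact (a + Suc m) t"
    using gbinom_mult_qfact[of a "Suc m" t] by (simp add: algebra_simps)
  also have "\<dots> = (1 - t ^ Suc m) * qint (a + Suc m) t * qfact (a + m) t"
    using qfact_Suc[of "a + m" t] by simp
  also have "(1 - t ^ Suc m) * qint (a + Suc m) t = (1 - t ^ (a + Suc m)) * qint (Suc m) t"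
    by (simp only: qint_eq_geometric ac_simps)
  also have "(1 - t ^ (a + Suc m)) * qint (Suc m) t * qfact (a + m) t
           = (1 - t ^ (a + Suc m)) * gbinom a m t * (qfact a t * qfact (Suc m) t)"
    by (simp add: gbinom_mult_qfact[of a m t, symmetric] qfact_Suc[of m t] ac_simps)
  finally show ?thesis
    using qfact_nonzero by simp
qed

end

lemma qfact_X2_nonzero: "qfact i (([:0, 1:] :: int poly) ^ 2) \<noteq> 0"
proof -
  have "poly (qint j (([:0, 1:] :: int poly) ^ 2)) 0 = 1" if "j \<ge> 1" for j
  proof -
    have "poly (qint j (([:0, 1:] :: int poly) ^ 2)) 0 = (\<Sum>l<j. (0::int) ^ (2 * l))"
      unfolding qint_def by (simp add: poly_sum power_mult)
    also have "\<dots> = (\<Sum>l\<in>{0}. (0::int) ^ (2 * l))"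
      using that by (intro sum.mono_neutral_right) auto
    finally show ?thesis by simp
  qed
  then show ?thesis
    unfolding qfact_def by (fastforce simp: prod_zero_iff)
qed

section \<open>Fixed-point patterns and their major index\<close>

definition moved_before :: "bool list \<Rightarrow> nat \<Rightarrow> nat" where
  "moved_before b i = length (filter (\<lambda>x. \<not> b ! x) [0..<i])"

definition fixed_patterns :: "nat \<Rightarrow> nat \<Rightarrow> bool list set" where
  "fixed_patterns a m = {b. length b = a + m \<and> moved_before b (length b) = a}"

text \<open>A pattern marks the fixed points of a signed permutation \<open>\<pi>\<close> by \<open>True\<close>. The moved
  position \<open>p\<close> carries the letter of \<open>\<sigma>\<close> of index \<open>moved_before b p\<close>, and whether \<open>\<pi>\<close> descends
  at \<open>p\<close> is decided by \<open>e j\<close> (\<open>\<sigma>\<^sub>j\<close> is an excedance) and \<open>d j\<close> (\<open>\<sigma>\<close> descends after \<open>\<sigma>\<^sub>j\<close>).\<close>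

definition pattern_des :: "(nat \<Rightarrow> bool) \<Rightarrow> (nat \<Rightarrow> bool) \<Rightarrow> bool list \<Rightarrow> nat \<Rightarrow> bool" where
  "pattern_des e d b p =
     (if b ! (p - 1) then (if b ! p then False else \<not> e (moved_before b p))
      else (if b ! p then e (moved_before b (p - 1)) else d (moved_before b (p - 1))))"

definition pattern_maj :: "(nat \<Rightarrow> bool) \<Rightarrow> (nat \<Rightarrow> bool) \<Rightarrow> bool list \<Rightarrow> nat" where
  "pattern_maj e d b = (\<Sum>p\<in>{1..<length b}. if pattern_des e d b p then p else 0)"

lemma moved_before_0 [simp]: "moved_before b 0 = 0"
  by (simp add: moved_before_def)

lemma moved_before_Suc: "moved_before b (Suc i) = moved_before b i + (if b ! i then 0 else 1)"
  by (simp add: moved_before_def)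

lemma moved_before_le: "moved_before b i \<le> i"
  unfolding moved_before_def using length_filter_le[of _ "[0..<i]"] by simp

lemma moved_before_append: "i \<le> length b \<Longrightarrow> moved_before (b @ c) i = moved_before b i"
  unfolding moved_before_def
  by (intro arg_cong[where f=length] filter_cong) (auto simp: nth_append)

lemma moved_before_append_length [simp]:
  "moved_before (b @ c) (length b) = moved_before b (length b)"
  by (simp add: moved_before_append)

lemma moved_before_append_Cons_length [simp]:
  "moved_before (b @ x # c) (Suc (length b)) = moved_before b (length b) + (if x then 0 else 1)"
  using moved_before_Suc[of "b @ x # c" "length b"] by simp

lemma moved_before_snoc:
  "moved_before (b @ [x]) (length (b @ [x])) = moved_before b (length b) + (if x then 0 else 1)"
  using moved_before_Suc[of "b @ [x]" "length b"] moved_before_append[of "length b" b "[x]"] by simp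

lemma moved_before_replicate: "i \<le> a \<Longrightarrow> moved_before (replicate a False) i = i"
  unfolding moved_before_def by (subst filter_True) auto

lemma moved_before_all_moved:
  "moved_before b (length b) = length b \<Longrightarrow> i < length b \<Longrightarrow> \<not> b ! i"
proof (induction b rule: rev_induct)
  case (snoc x b)
  then have "\<not> x" "moved_before b (length b) = length b"
    using moved_before_le[of b "length b"] moved_before_snoc[of b x] by (auto split: if_splits)
  then show ?case
    using snoc by (cases "i < length b") (simp_all add: nth_append)
qed simp

lemma pattern_des_append: "p < length b \<Longrightarrow> pattern_des e d (b @ c) p = pattern_des e d b p"
  unfolding pattern_des_def by (simp add: nth_append moved_before_append less_imp_diff_less)

lemma pattern_des_snoc:
  assumes "b \<noteq> []"
  shows "pattern_des e d (b @ [x]) (length b) =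
    (if last b then \<not> x \<and> \<not> e (moved_before b (length b))
     else if x then e (moved_before b (length b) - 1) else d (moved_before b (length b) - 1))"
proof -
  obtain c y where "b = c @ [y]"
    using assms by (metis append_butlast_last_id)
  then show ?thesis
    unfolding pattern_des_def by (cases x; cases y) (simp_all add: nth_append)
qed

lemma pattern_maj_snoc:
  "pattern_maj e d (b @ [x]) =
     pattern_maj e d b + (if b \<noteq> [] \<and> pattern_des e d (b @ [x]) (length b) then length b else 0)"
proof (cases "b = []")
  case False
  then have "{1..<length (b @ [x])} = insert (length b) {1..<length b}"
    by (cases b) auto
  moreover have "(\<Sum>p\<in>{1..<length b}. if pattern_des e d (b @ [x]) p then p else 0)
    = pattern_maj e d b"
    unfolding pattern_maj_def by (intro sum.cong) (auto simp: pattern_des_append)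
  ultimately show ?thesis
    using False unfolding pattern_maj_def by simp
qed (simp add: pattern_maj_def)

lemma pattern_maj_replicate_Suc:
  "pattern_maj e d (replicate (Suc a) False)
     = pattern_maj e d (replicate a False) + (if a \<ge> 1 \<and> d (a - 1) then a else 0)"
proof (cases a)
  case (Suc a')
  have "replicate (Suc a) False = replicate a False @ [False]"
    by (simp add: replicate_append_same)
  moreover have "replicate a False \<noteq> []" "\<not> last (replicate a False)" "a \<ge> 1"
    using Suc by simp_all
  moreover have "moved_before (replicate a False) a = a"
    by (simp add: moved_before_replicate)
  ultimately show ?thesis
    using pattern_des_snoc[of "replicate a False" e d False] by (simp add: pattern_maj_snoc)
qed (simp add: pattern_maj_def)

lemma finite_fixed_patterns: "finite (fixed_patterns a m)"
  by (rule finite_subset[OF _ finite_lists_length_eq[of "UNIV :: bool set" "a + m"]])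
     (auto simp: fixed_patterns_def)

abbreviation ends_moved :: "bool list \<Rightarrow> bool" where
  "ends_moved b \<equiv> b \<noteq> [] \<and> \<not> last b"

lemma fixed_patterns_ends_moved:
  "{b \<in> fixed_patterns (Suc a) m. ends_moved b} = (\<lambda>b. b @ [False]) ` fixed_patterns a m"
proof (intro set_eqI iffI)
  fix b assume b: "b \<in> {b \<in> fixed_patterns (Suc a) m. ends_moved b}"
  then have "b = butlast b @ [False]"
    using append_butlast_last_id[of b] by simp
  moreover from this have "butlast b \<in> fixed_patterns a m"
    using b moved_before_snoc[of "butlast b" False] by (auto simp: fixed_patterns_def)
  ultimately show "b \<in> (\<lambda>b. b @ [False]) ` fixed_patterns a m" by blast
next
  fix b assume "b \<in> (\<lambda>b. b @ [False]) ` fixed_patterns a m"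
  then show "b \<in> {b \<in> fixed_patterns (Suc a) m. ends_moved b}"
    using moved_before_snoc by (auto simp: fixed_patterns_def)
qed

lemma fixed_patterns_ends_fixed:
  "{b \<in> fixed_patterns a (Suc m). \<not> ends_moved b} = (\<lambda>b. b @ [True]) ` fixed_patterns a m"
proof (intro set_eqI iffI)
  fix b assume b: "b \<in> {b \<in> fixed_patterns a (Suc m). \<not> ends_moved b}"
  then have "b \<noteq> []" "last b"
    by (auto simp: fixed_patterns_def)
  then have "b = butlast b @ [True]"
    using append_butlast_last_id[of b] by simp
  moreover from this have "butlast b \<in> fixed_patterns a m"
    using b moved_before_snoc[of "butlast b" True] by (auto simp: fixed_patterns_def)
  ultimately show "b \<in> (\<lambda>b. b @ [True]) ` fixed_patterns a m" by blast
next
  fix b assume "b \<in> (\<lambda>b. b @ [True]) ` fixed_patterns a m"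
  then show "b \<in> {b \<in> fixed_patterns a (Suc m). \<not> ends_moved b}"
    using moved_before_snoc by (auto simp: fixed_patterns_def)
qed

lemma fixed_patterns_0_ends_moved: "{b \<in> fixed_patterns 0 m. ends_moved b} = {}"
proof -
  have "moved_before b (length b) \<ge> 1" if "ends_moved b" for b
  proof -
    have "b = butlast b @ [False]"
      using that append_butlast_last_id[of b] by simp
    then show ?thesis
      using moved_before_snoc[of "butlast b" False] by (subst (1 2) \<open>b = _\<close>) simp
  qed
  then show ?thesis
    unfolding fixed_patterns_def by fastforce
qed

lemma fixed_patterns_0_right_ends_fixed: "{b \<in> fixed_patterns (Suc a) 0. \<not> ends_moved b} = {}"
proof -
  have "ends_moved b" if "b \<in> fixed_patterns (Suc a) 0" for b
  proof -
    have "length b = Suc a" "moved_before b (length b) = length b" "b \<noteq> []"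
      using that by (auto simp: fixed_patterns_def)
    then show ?thesis
      using moved_before_all_moved[of b "length b - 1"] by (simp add: last_conv_nth)
  qed
  then show ?thesis by blast
qed

definition maj_gf_moved :: "(nat \<Rightarrow> bool) \<Rightarrow> (nat \<Rightarrow> bool) \<Rightarrow> 'a::comm_ring_1 \<Rightarrow> nat \<Rightarrow> nat \<Rightarrow> 'a" where
  "maj_gf_moved e d t a m = (\<Sum>b\<in>{b \<in> fixed_patterns a m. ends_moved b}. t ^ pattern_maj e d b)"

definition maj_gf_fixed :: "(nat \<Rightarrow> bool) \<Rightarrow> (nat \<Rightarrow> bool) \<Rightarrow> 'a::comm_ring_1 \<Rightarrow> nat \<Rightarrow> nat \<Rightarrow> 'a" where
  "maj_gf_fixed e d t a m = (\<Sum>b\<in>{b \<in> fixed_patterns a m. \<not> ends_moved b}. t ^ pattern_maj e d b)"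

lemma sum_split_by_predicate:
  "finite A \<Longrightarrow> sum f A = sum f {x \<in> A. P x} + sum f {x \<in> A. \<not> P x}"
proof -
  assume "finite A"
  moreover have "A = {x \<in> A. P x} \<union> {x \<in> A. \<not> P x}"
    by auto
  ultimately show ?thesis
    by (metis (no_types, lifting) sum.union_disjoint finite_Un disjoint_iff mem_Collect_eq)
qed

lemma sum_pattern_maj_split:
  "(\<Sum>b\<in>fixed_patterns a m. t ^ pattern_maj e d b) = maj_gf_moved e d t a m + maj_gf_fixed e d t a m"
  unfolding maj_gf_moved_def maj_gf_fixed_def
  by (rule sum_split_by_predicate[OF finite_fixed_patterns])

lemma sum_pattern_maj_snoc:
  "(\<Sum>b\<in>fixed_patterns a m. t ^ pattern_maj e d (b @ [x])) =
     t ^ (if (if x then e (a - 1) else d (a - 1)) then a + m else 0) * maj_gf_moved e d t a m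
   + t ^ (if \<not> x \<and> \<not> e a then a + m else 0) * maj_gf_fixed e d t a m"
proof -
  define w where "w b = t ^ pattern_maj e d b
    * t ^ (if b \<noteq> [] \<and> pattern_des e d (b @ [x]) (length b) then length b else 0)" for b
  have "(\<Sum>b\<in>fixed_patterns a m. t ^ pattern_maj e d (b @ [x])) = (\<Sum>b\<in>fixed_patterns a m. w b)"
    by (simp add: w_def pattern_maj_snoc power_add)
  also have "\<dots> = (\<Sum>b\<in>{b \<in> fixed_patterns a m. ends_moved b}. w b)
                + (\<Sum>b\<in>{b \<in> fixed_patterns a m. \<not> ends_moved b}. w b)"
    by (rule sum_split_by_predicate[OF finite_fixed_patterns])
  also have "(\<Sum>b\<in>{b \<in> fixed_patterns a m. ends_moved b}. w b)
      = (\<Sum>b\<in>{b \<in> fixed_patterns a m. ends_moved b}.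
           t ^ pattern_maj e d b * t ^ (if (if x then e (a - 1) else d (a - 1)) then a + m else 0))"
    by (intro sum.cong refl) (auto simp: w_def pattern_des_snoc fixed_patterns_def)
  also have "(\<Sum>b\<in>{b \<in> fixed_patterns a m. \<not> ends_moved b}. w b)
      = (\<Sum>b\<in>{b \<in> fixed_patterns a m. \<not> ends_moved b}.
           t ^ pattern_maj e d b * t ^ (if \<not> x \<and> \<not> e a then a + m else 0))"
  proof (intro sum.cong refl)
    fix b assume "b \<in> {b \<in> fixed_patterns a m. \<not> ends_moved b}"
    then show "w b = t ^ pattern_maj e d b * t ^ (if \<not> x \<and> \<not> e a then a + m else 0)"
      using pattern_des_snoc[of b e d x] by (cases "b = []") (auto simp: w_def fixed_patterns_def)
  qed
  finally show ?thesis
    unfolding maj_gf_moved_def maj_gf_fixed_def sum_distrib_right[symmetric]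
    by (simp add: mult.commute)
qed

lemma maj_gf_moved_Suc:
  "maj_gf_moved e d t (Suc a) m = t ^ (if d (a - 1) then a + m else 0) * maj_gf_moved e d t a m
                                + t ^ (if \<not> e a then a + m else 0) * maj_gf_fixed e d t a m"
proof -
  have "maj_gf_moved e d t (Suc a) m = (\<Sum>b\<in>fixed_patterns a m. t ^ pattern_maj e d (b @ [False]))"
    unfolding maj_gf_moved_def fixed_patterns_ends_moved
    by (subst sum.reindex) (auto simp: inj_on_def)
  then show ?thesis
    by (simp add: sum_pattern_maj_snoc)
qed

lemma maj_gf_fixed_Suc:
  "maj_gf_fixed e d t a (Suc m) = t ^ (if e (a - 1) then a + m else 0) * maj_gf_moved e d t a m
                                + maj_gf_fixed e d t a m"
proof -
  have "maj_gf_fixed e d t a (Suc m) = (\<Sum>b\<in>fixed_patterns a m. t ^ pattern_maj e d (b @ [True]))"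
    unfolding maj_gf_fixed_def fixed_patterns_ends_fixed
    by (subst sum.reindex) (auto simp: inj_on_def)
  then show ?thesis
    by (simp add: sum_pattern_maj_snoc)
qed

lemma maj_gf_moved_0: "maj_gf_moved e d t 0 m = 0"
  unfolding maj_gf_moved_def fixed_patterns_0_ends_moved by simp

lemma maj_gf_fixed_0_right: "maj_gf_fixed e d t (Suc a) 0 = 0"
  unfolding maj_gf_fixed_def fixed_patterns_0_right_ends_fixed by simp

lemma maj_gf_fixed_0_0: "maj_gf_fixed e d t 0 0 = 1"
proof -
  have "{b \<in> fixed_patterns 0 0. \<not> ends_moved b} = {[]}"
    by (auto simp: fixed_patterns_def)
  then show ?thesis
    unfolding maj_gf_fixed_def by (simp add: pattern_maj_def)
qed

context qfact_nonzero
begin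

text \<open>In the mixed cases \<open>ex \<noteq> ey\<close> the identity holds only by one of the two q-Pascal rules,
  which the hypothesis selects.\<close>

lemma gbinom_moved_step:
  assumes "ex \<noteq> ey \<Longrightarrow> dz = ex"
  shows "t ^ (if dz then Suc a + m else 0) * (t ^ (D + (if ex then 0 else m)) * gbinom a m t)
       + t ^ (if \<not> ey then Suc a + m else 0)
         * (t ^ D * gbinom (Suc a) m t - t ^ (D + (if ex then 0 else m)) * gbinom a m t)
       = t ^ (D + (if dz then Suc a else 0) + (if ey then 0 else m)) * gbinom (Suc a) m t"
proof (cases m)
  case (Suc m')
  define A where "A = t ^ Suc a"
  define M where "M = t ^ Suc m'"
  define X where "X = gbinom a (Suc m') t"
  define Y where "Y = gbinom (Suc a) m' t"
  define G where "G = gbinom (Suc a) (Suc m') t"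
  define T where "T = t ^ D"
  have rels: "G = X + A * Y" "G = Y + M * X"
    unfolding G_def X_def A_def Y_def M_def by (rule gbinom.simps(3)) (rule gbinom_Suc_Suc_alt)
  have powers: "t ^ (if dz then Suc a + m else 0) = (if dz then A * M else 1)"
    "t ^ (if \<not> ey then Suc a + m else 0) = (if \<not> ey then A * M else 1)"
    "t ^ (D + (if ex then 0 else m)) = T * (if ex then 1 else M)"
    "t ^ (D + (if dz then Suc a else 0) + (if ey then 0 else m))
       = T * (if dz then A else 1) * (if ey then 1 else M)"
    "gbinom a m t = X" "gbinom (Suc a) m t = G" "t ^ D = T"
    unfolding A_def M_def T_def X_def G_def Suc by (simp_all add: power_add)
  show ?thesis
    unfolding powers using rels assms
    by (cases ex; cases ey; cases dz) (simp_all add: algebra_simps, algebra+)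
qed (simp add: power_add mult.commute)

lemma gbinom_total_step:
  "t ^ (D + (if ex then 0 else Suc m)) * gbinom a (Suc m) t
   + (t ^ (if ex then Suc a + m else 0) * (t ^ (D + (if ex then 0 else m)) * gbinom a m t)
      + (t ^ D * gbinom (Suc a) m t - t ^ (D + (if ex then 0 else m)) * gbinom a m t))
   = t ^ D * gbinom (Suc a) (Suc m) t"
proof (cases ex)
  case True
  define X where "X = gbinom a (Suc m) t"
  define W where "W = gbinom a m t"
  define Y where "Y = gbinom (Suc a) m t"
  define G where "G = gbinom (Suc a) (Suc m) t"
  define T where "T = t ^ D"
  define L where "L = t ^ (a + Suc m)"
  define M where "M = t ^ Suc m"
  have "(1 - M) * X = (1 - L) * W" "G = Y + M * X"
    unfolding X_def W_def Y_def G_def M_def L_def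
    by (rule gbinom_Suc_right_ratio) (rule gbinom_Suc_Suc_alt)
  then have "T * X + (L * (T * W) + (T * Y - T * W)) = T * G"
    by algebra
  then show ?thesis
    using True unfolding X_def W_def Y_def G_def T_def L_def by simp
qed (simp add: gbinom_Suc_Suc_alt algebra_simps power_add del: gbinom.simps(3))

end

locale maj_gf_compatible = qfact_nonzero t for t :: "'a::idom" +
  fixes e d :: "nat \<Rightarrow> bool"
  assumes compatible: "e j \<noteq> e (Suc j) \<Longrightarrow> d j = e j"
begin

abbreviation "maj\<^sub>0 a \<equiv> pattern_maj e d (replicate a False)"

lemma maj_gf_moved_Suc_0: "maj_gf_moved e d t (Suc a) 0 = t ^ maj\<^sub>0 (Suc a)"
proof (induction a)
  case 0
  then show ?case
    by (simp add: maj_gf_moved_Suc maj_gf_moved_0 maj_gf_fixed_0_0 pattern_maj_def)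
next
  case (Suc a)
  then show ?case
    using pattern_maj_replicate_Suc[of e d "Suc a"]
    by (simp add: maj_gf_moved_Suc[of e d t "Suc a"] maj_gf_fixed_0_right power_add mult.commute)
qed

lemma maj_gf_moved_Suc_Suc:
  assumes "maj_gf_moved e d t (Suc a) m = t ^ (maj\<^sub>0 (Suc a) + (if e a then 0 else m)) * gbinom a m t"
    and "maj_gf_moved e d t (Suc a) m + maj_gf_fixed e d t (Suc a) m
      = t ^ maj\<^sub>0 (Suc a) * gbinom (Suc a) m t"
  shows "maj_gf_moved e d t (Suc (Suc a)) m
           = t ^ (maj\<^sub>0 (Suc (Suc a)) + (if e (Suc a) then 0 else m)) * gbinom (Suc a) m t"
proof -
  have "maj_gf_fixed e d t (Suc a) m
          = t ^ maj\<^sub>0 (Suc a) * gbinom (Suc a) m t - maj_gf_moved e d t (Suc a) m"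
    using assms(2) by (simp add: algebra_simps)
  then show ?thesis
    unfolding maj_gf_moved_Suc[of e d t "Suc a"] pattern_maj_replicate_Suc[of e d "Suc a"]
    using assms(1) gbinom_moved_step[of "e a" "e (Suc a)" "d a" a m "maj\<^sub>0 (Suc a)"]
      compatible[of a]
    by simp
qed

lemma maj_gf_total_Suc_Suc:
  assumes "maj_gf_moved e d t (Suc a) (Suc m)
             = t ^ (maj\<^sub>0 (Suc a) + (if e a then 0 else Suc m)) * gbinom a (Suc m) t"
    and "maj_gf_moved e d t (Suc a) m = t ^ (maj\<^sub>0 (Suc a) + (if e a then 0 else m)) * gbinom a m t"
    and "maj_gf_moved e d t (Suc a) m + maj_gf_fixed e d t (Suc a) m
      = t ^ maj\<^sub>0 (Suc a) * gbinom (Suc a) m t"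
  shows "maj_gf_moved e d t (Suc a) (Suc m) + maj_gf_fixed e d t (Suc a) (Suc m)
           = t ^ maj\<^sub>0 (Suc a) * gbinom (Suc a) (Suc m) t"
proof -
  have "maj_gf_fixed e d t (Suc a) m
          = t ^ maj\<^sub>0 (Suc a) * gbinom (Suc a) m t - maj_gf_moved e d t (Suc a) m"
    using assms(3) by (simp add: algebra_simps)
  then show ?thesis
    unfolding maj_gf_fixed_Suc assms(1) using assms(2)
      gbinom_total_step[of "maj\<^sub>0 (Suc a)" "e a" m a]
    by simp
qed

lemma maj_gf_closed_forms:
  "maj_gf_moved e d t a m
     = (if a = 0 then 0 else t ^ (maj\<^sub>0 a + (if e (a - 1) then 0 else m)) * gbinom (a - 1) m t)
   \<and> maj_gf_moved e d t a m + maj_gf_fixed e d t a m = t ^ maj\<^sub>0 a * gbinom a m t"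
proof (induction m arbitrary: a)
  case 0
  show ?case
    by (cases a) (simp_all add: maj_gf_moved_0 maj_gf_fixed_0_0 maj_gf_fixed_0_right
                                maj_gf_moved_Suc_0 pattern_maj_def)
next
  case (Suc m)
  note outer = Suc.IH
  show ?case
  proof (induction a)
    case 0
    have "maj_gf_fixed e d t 0 m = 1"
      using outer[of 0] by (simp add: maj_gf_moved_0 pattern_maj_def)
    then show ?case
      by (simp add: maj_gf_moved_0 maj_gf_fixed_Suc pattern_maj_def)
  next
    case (Suc a)
    note inner = Suc.IH
    have moved: "maj_gf_moved e d t (Suc a) (Suc m)
                   = t ^ (maj\<^sub>0 (Suc a) + (if e a then 0 else Suc m)) * gbinom a (Suc m) t"
    proof (cases a)
      case 0
      then show ?thesis
        using inner by (simp add: maj_gf_moved_Suc maj_gf_moved_0 pattern_maj_def)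
    next
      case (Suc a')
      note closed = inner[unfolded Suc if_not_P[OF nat.distinct(2)] diff_Suc_1]
      show ?thesis
        unfolding Suc
        by (rule maj_gf_moved_Suc_Suc[OF closed[THEN conjunct1] closed[THEN conjunct2]])
    qed
    note closed = outer[of "Suc a", unfolded if_not_P[OF nat.distinct(2)] diff_Suc_1]
    show ?case
      using moved maj_gf_total_Suc_Suc[OF moved closed[THEN conjunct1] closed[THEN conjunct2]]
      by simp
  qed
qed

lemma sum_pattern_maj:
  "(\<Sum>b\<in>fixed_patterns a m. t ^ pattern_maj e d b) = t ^ maj\<^sub>0 a * gbinom a m t"
  using maj_gf_closed_forms sum_pattern_maj_split by metis

end

section \<open>Inflating a derangement by a fixed-point pattern\<close>

definition moved_positions :: "bool list \<Rightarrow> nat list" where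
  "moved_positions b = filter (\<lambda>i. \<not> b ! i) [0..<length b]"

lemma length_moved_positions: "length (moved_positions b) = moved_before b (length b)"
  by (simp add: moved_positions_def moved_before_def)

lemma distinct_moved_positions: "distinct (moved_positions b)"
  by (simp add: moved_positions_def)

lemma set_moved_positions: "set (moved_positions b) = {i. i < length b \<and> \<not> b ! i}"
  by (auto simp: moved_positions_def)

lemma sorted_moved_positions: "sorted_wrt (<) (moved_positions b)"
  unfolding moved_positions_def by (rule sorted_wrt_filter) (rule sorted_wrt_upt)

lemma moved_positions_less:
  "j1 < j2 \<Longrightarrow> j2 < length (moved_positions b) \<Longrightarrow> moved_positions b ! j1 < moved_positions b ! j2"
  using sorted_wrt_nth_less[OF sorted_moved_positions] by blast

lemma moved_positions_less_iff:
  "j1 < length (moved_positions b) \<Longrightarrow> j2 < length (moved_positions b)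
    \<Longrightarrow> moved_positions b ! j1 < moved_positions b ! j2 \<longleftrightarrow> j1 < j2"
  by (metis moved_positions_less not_less_iff_gr_or_eq order.asym)

lemma moved_positions_le_iff:
  "j1 < length (moved_positions b) \<Longrightarrow> j2 < length (moved_positions b)
    \<Longrightarrow> moved_positions b ! j1 \<le> moved_positions b ! j2 \<longleftrightarrow> j1 \<le> j2"
  by (metis moved_positions_less_iff not_less)

lemma moved_positions_eq_iff:
  "j1 < length (moved_positions b) \<Longrightarrow> j2 < length (moved_positions b)
    \<Longrightarrow> moved_positions b ! j1 = moved_positions b ! j2 \<longleftrightarrow> j1 = j2"
  by (metis moved_positions_less_iff not_less_iff_gr_or_eq)

lemma moved_positions_nth:
  "j < length (moved_positions b) \<Longrightarrow> moved_positions b ! j < length b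
    \<and> \<not> b ! (moved_positions b ! j)"
  using nth_mem[of j "moved_positions b"] set_moved_positions by blast

lemma moved_positions_moved_before:
  assumes "i < length b" "\<not> b ! i"
  shows "moved_before b i < length (moved_positions b) \<and> moved_positions b ! moved_before b i = i"
proof -
  have "[0..<length b] = [0..<i] @ i # [Suc i..<length b]"
    using assms(1)
    by (metis le_add_diff_inverse less_imp_le_nat upt_add_eq_append upt_conv_Cons zero_le)
  then have "moved_positions b
    = filter (\<lambda>i. \<not> b ! i) [0..<i] @ i # filter (\<lambda>i. \<not> b ! i) [Suc i..<length b]"
    unfolding moved_positions_def using assms(2) by simp
  then show ?thesis unfolding moved_before_def by (simp add: nth_append)
qed

lemma moved_before_moved_positions:
  "j < length (moved_positions b) \<Longrightarrow> moved_before b (moved_positions b ! j) = j"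
  using moved_positions_moved_before[of "moved_positions b ! j" b] moved_positions_nth[of j b]
    moved_positions_eq_iff[of "moved_before b (moved_positions b ! j)" b j]
  by auto

text \<open>\<open>relabel b\<close> sends a letter \<open>\<plusminus>c\<close> to \<open>\<plusminus>(p + 1)\<close> for the \<open>c\<close>-th moved position \<open>p\<close> of
  \<open>b\<close>, undoing the reduction performed by \<open>dp\<close>.\<close>

definition relabel :: "bool list \<Rightarrow> int \<Rightarrow> int" where
  "relabel b v = sgn v * (int (moved_positions b ! (nat \<bar>v\<bar> - 1)) + 1)"

definition inflate :: "int list \<Rightarrow> bool list \<Rightarrow> int list" where
  "inflate s b
    = map (\<lambda>i. if b ! i then int i + 1 else relabel b (s ! moved_before b i)) [0..<length b]"

definition fixed_pattern :: "int list \<Rightarrow> bool list" where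
  "fixed_pattern w = map (\<lambda>i. w ! i = int i + 1) [0..<length w]"

lemma dp_eq_red_filter: "dp w = red (map (nth w) (filter (\<lambda>i. w ! i \<noteq> int i + 1) [0..<length w]))"
proof -
  have z: "zip w [0..<length w] = map (\<lambda>i. (w ! i, i)) [0..<length w]"
    by (rule nth_equalityI) auto
  show ?thesis unfolding dp_def z by (simp add: filter_map o_def ac_simps)
qed

lemma int_nat_diff_one: "1 \<le> (x::int) \<Longrightarrow> int (nat x - 1) + 1 = x"
  by (simp add: of_nat_diff)

lemma image_moved_positions:
  "(\<lambda>c. f (moved_positions b ! c)) ` {..<length (moved_positions b)} = f ` set (moved_positions b)"
proof -
  have "(\<lambda>c. f (moved_positions b ! c)) ` {..<length (moved_positions b)}
          = f ` (nth (moved_positions b) ` {..<length (moved_positions b)})"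
    by (simp add: image_image)
  also have "nth (moved_positions b) ` {..<length (moved_positions b)} = set (moved_positions b)"
    by (simp add: atLeast0LessThan[symmetric] nth_image)
  finally show ?thesis .
qed

lemma card_moved_positions_le:
  assumes "c0 < length (moved_positions b)"
  shows "card {y \<in> (\<lambda>v. int v + 1) ` set (moved_positions b). y \<le> int (moved_positions b ! c0) + 1}
    = Suc c0" (is "card ?S = _")
proof -
  have "?S = {y \<in> (\<lambda>c. int (moved_positions b ! c) + 1) ` {..<length (moved_positions b)}.
             y \<le> int (moved_positions b ! c0) + 1}"
    using image_moved_positions[of "\<lambda>v. int v + 1" b] by simp
  also have "\<dots> = (\<lambda>c. int (moved_positions b ! c) + 1) ` {..c0}"
    using assms moved_positions_le_iff[of _ b c0] by (auto simp: image_iff)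
  finally have "?S = (\<lambda>c. int (moved_positions b ! c) + 1) ` {..c0}" .
  moreover have "inj_on (\<lambda>c. int (moved_positions b ! c) + 1) {..c0}"
    using assms moved_positions_eq_iff[of _ b] by (auto simp: inj_on_def)
  ultimately show ?thesis by (simp add: card_image)
qed

locale inflation =
  fixes s :: "int list" and k n :: nat and b :: "bool list"
  assumes sig: "s \<in> DB k" and bl: "b \<in> fixed_patterns k (n - k)" and kn: "k \<le> n"
begin

lemma length_b: "length b = n" using bl kn unfolding fixed_patterns_def by auto
lemma length_moved_b: "length (moved_positions b) = k"
  using bl kn unfolding fixed_patterns_def length_moved_positions by auto
lemma length_s: "length s = k" using sig by (simp add: DB_def Bn_def)

lemma abs_s_bounds: "j < k \<Longrightarrow> 1 \<le> \<bar>s ! j\<bar> \<and> \<bar>s ! j\<bar> \<le> int k"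
proof -
  assume j: "j < k"
  have "\<bar>s ! j\<bar> \<in> set (map abs s)" using j length_s nth_mem[of j s] by auto
  then show ?thesis using sig by (simp add: DB_def Bn_def)
qed

lemma s_not_fixed: "j < k \<Longrightarrow> s ! j \<noteq> int j + 1"
  using sig unfolding DB_def by (simp add: add.commute)

lemma abs_s_inj: "j1 < k \<Longrightarrow> j2 < k \<Longrightarrow> \<bar>s ! j1\<bar> = \<bar>s ! j2\<bar> \<Longrightarrow> j1 = j2"
  using sig length_s unfolding DB_def Bn_def by (auto simp: distinct_conv_nth)

definition abs_index :: "nat \<Rightarrow> nat" where "abs_index j = nat \<bar>s ! j\<bar> - 1"

lemma abs_index_less: "j < k \<Longrightarrow> abs_index j < k"
  using abs_s_bounds[of j] unfolding abs_index_def by linarith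

lemma abs_s_eq: "j < k \<Longrightarrow> \<bar>s ! j\<bar> = int (abs_index j) + 1"
  using abs_s_bounds[of j] int_nat_diff_one unfolding abs_index_def by metis

lemma abs_index_inj: "j1 < k \<Longrightarrow> j2 < k \<Longrightarrow> abs_index j1 = abs_index j2 \<Longrightarrow> j1 = j2"
  using abs_s_eq abs_s_inj by metis

lemma bij_abs_index: "bij_betw abs_index {..<k} {..<k}"
proof -
  have "inj_on abs_index {..<k}" using abs_index_inj by (auto simp: inj_on_def)
  moreover have "abs_index ` {..<k} \<subseteq> {..<k}" using abs_index_less by auto
  ultimately show ?thesis by (simp add: bij_betw_def endo_inj_surj)
qed

lemma s_nonzero: "j < k \<Longrightarrow> s ! j \<noteq> 0" using abs_s_bounds[of j] by auto

lemma relabel_s: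
  "j < k \<Longrightarrow> relabel b (s ! j)
    = (if s ! j > 0 then int (moved_positions b ! abs_index j) + 1
       else - (int (moved_positions b ! abs_index j) + 1))"
  using s_nonzero[of j] by (auto simp: relabel_def abs_index_def sgn_if)

lemma abs_relabel_s: "j < k \<Longrightarrow> \<bar>relabel b (s ! j)\<bar> = int (moved_positions b ! abs_index j) + 1"
  using relabel_s by auto

lemma relabel_s_pos_iff: "j < k \<Longrightarrow> relabel b (s ! j) > 0 \<longleftrightarrow> s ! j > 0"
  using relabel_s by auto

abbreviation "\<pi> \<equiv> inflate s b"

lemma length_pi: "length \<pi> = n" by (simp add: inflate_def length_b)

lemma pi_fixed: "i < n \<Longrightarrow> b ! i \<Longrightarrow> \<pi> ! i = int i + 1"
  by (simp add: inflate_def length_b)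

lemma pi_moved:
  "i < n \<Longrightarrow> \<not> b ! i \<Longrightarrow> \<pi> ! i = relabel b (s ! moved_before b i) \<and> moved_before b i < k
    \<and> moved_positions b ! moved_before b i = i"
  using moved_positions_moved_before[of i b] length_b length_moved_b by (simp add: inflate_def)

lemma pi_moved_positions: "j < k \<Longrightarrow> \<pi> ! (moved_positions b ! j) = relabel b (s ! j)"
  using moved_positions_nth[of j b] pi_moved[of "moved_positions b ! j"]
    moved_before_moved_positions[of j b] length_moved_b length_b
  by auto

lemma pi_fixed_iff: "i < n \<Longrightarrow> \<pi> ! i = int i + 1 \<longleftrightarrow> b ! i"
proof
  assume i: "i < n" and eq: "\<pi> ! i = int i + 1"
  show "b ! i"
  proof (rule ccontr)
    assume nb: "\<not> b ! i"
    define j where "j = moved_before b i"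
    have j: "j < k" "moved_positions b ! j = i" "\<pi> ! i = relabel b (s ! j)"
      using pi_moved[OF i nb] j_def by auto
    then have pos: "s ! j > 0" and v: "int (moved_positions b ! abs_index j) + 1 = int i + 1"
      using eq relabel_s[OF j(1)] by (auto split: if_splits)
    then have "moved_positions b ! abs_index j = moved_positions b ! j" using j by simp
    then have "abs_index j = j"
      using moved_positions_eq_iff[of "abs_index j" b j] abs_index_less[OF j(1)] j(1)
        length_moved_b by simp
    then have "s ! j = int j + 1" using abs_s_eq[OF j(1)] pos by simp
    then show False using s_not_fixed[OF j(1)] by simp
  qed
next
  assume "i < n" "b ! i" then show "\<pi> ! i = int i + 1" by (rule pi_fixed)
qed

lemma fixed_pattern_pi: "fixed_pattern \<pi> = b"
  by (rule nth_equalityI) (auto simp: fixed_pattern_def length_pi length_b pi_fixed_iff)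

lemma abs_pi:
  "i < n \<Longrightarrow> \<bar>\<pi> ! i\<bar>
     = (if b ! i then int i + 1 else int (moved_positions b ! abs_index (moved_before b i)) + 1)"
  using pi_fixed pi_moved abs_relabel_s by auto

lemma moved_positions_abs_index:
  assumes "i < n" "\<not> b ! i"
  shows "moved_positions b ! abs_index (moved_before b i) < n
     \<and> \<not> b ! (moved_positions b ! abs_index (moved_before b i))"
proof -
  have "abs_index (moved_before b i) < k"
    using pi_moved[OF assms] abs_index_less by blast
  then show ?thesis
    using moved_positions_nth[of _ b] length_moved_b length_b by simp
qed

lemma inj_on_abs_pi: "inj_on (\<lambda>i. \<bar>\<pi> ! i\<bar>) {..<n}"
proof (rule inj_onI)
  fix i i' assume i: "i \<in> {..<n}" and i': "i' \<in> {..<n}" and eq: "\<bar>\<pi> ! i\<bar> = \<bar>\<pi> ! i'\<bar>"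
  show "i = i'"
  proof (cases "b ! i"; cases "b ! i'")
    assume a: "\<not> b ! i" "\<not> b ! i'"
    then have "moved_positions b ! abs_index (moved_before b i)
      = moved_positions b ! abs_index (moved_before b i')"
      using eq i i' by (simp add: abs_pi)
    then have "abs_index (moved_before b i) = abs_index (moved_before b i')"
      using moved_positions_eq_iff abs_index_less pi_moved a i i' length_moved_b by simp
    then have "moved_before b i = moved_before b i'"
      using abs_index_inj pi_moved a i i' by simp
    then show ?thesis
      using pi_moved[of i] pi_moved[of i'] a i i' by (metis lessThan_iff)
  qed (use eq i i' moved_positions_abs_index in \<open>auto simp: abs_pi split: if_splits\<close>)
qed

lemma pi_in_Bn: "\<pi> \<in> Bn n"
proof -
  have "\<bar>\<pi> ! i\<bar> \<in> {1..int n}" if "i < n" for i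
    using that moved_positions_abs_index[OF that] by (cases "b ! i") (auto simp: abs_pi)
  then have "(\<lambda>i. \<bar>\<pi> ! i\<bar>) ` {..<n} \<subseteq> {1..int n}"
    by auto
  moreover have "card ((\<lambda>i. \<bar>\<pi> ! i\<bar>) ` {..<n}) = card {1..int n}"
    using inj_on_abs_pi by (simp add: card_image)
  ultimately have "(\<lambda>i. \<bar>\<pi> ! i\<bar>) ` {..<n} = {1..int n}"
    by (intro card_subset_eq) auto
  moreover have map_abs: "map abs \<pi> = map (\<lambda>i. \<bar>\<pi> ! i\<bar>) [0..<n]"
    by (rule nth_equalityI) (auto simp: length_pi)
  ultimately have "set (map abs \<pi>) = {1..int n}"
    by (simp add: atLeast0LessThan)
  moreover have "distinct (map abs \<pi>)"
    unfolding map_abs using inj_on_abs_pi by (simp add: distinct_map atLeast0LessThan)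
  ultimately show ?thesis
    unfolding Bn_def using length_pi by blast
qed

lemma moved_indices_pi: "filter (\<lambda>i. \<pi> ! i \<noteq> int i + 1) [0..<length \<pi>] = moved_positions b"
  unfolding moved_positions_def length_pi length_b by (intro filter_cong) (auto simp: pi_fixed_iff)

lemma map_pi_moved_positions: "map (nth \<pi>) (moved_positions b) = map (relabel b) s"
  by (rule nth_equalityI) (auto simp: length_moved_b length_s pi_moved_positions)

lemma red_map_relabel: "red (map (relabel b) s) = s"
proof (rule nth_equalityI)
  show "length (red (map (relabel b) s)) = length s" by (simp add: red_def)
next
  fix j assume "j < length (red (map (relabel b) s))"
  then have j: "j < k" by (simp add: red_def length_s)
  have S: "set (map abs (map (relabel b) s)) = (\<lambda>v. int v + 1) ` set (moved_positions b)"
  proof -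
    have "set (map abs (map (relabel b) s)) = (\<lambda>x. \<bar>relabel b x\<bar>) ` set s" by auto
    also have "\<dots> = (\<lambda>x. \<bar>relabel b x\<bar>) ` (nth s ` {..<k})"
      using nth_image[of k s] length_s by (simp add: atLeast0LessThan)
    also have "\<dots> = (\<lambda>j. \<bar>relabel b (s ! j)\<bar>) ` {..<k}"
      by (simp add: image_image)
    finally have "set (map abs (map (relabel b) s)) = (\<lambda>j. \<bar>relabel b (s ! j)\<bar>) ` {..<k}" .
    also have "\<dots> = (\<lambda>cc. int (moved_positions b ! cc) + 1) ` (abs_index ` {..<k})"
      using abs_relabel_s by (auto simp: image_iff)
    also have "\<dots> = (\<lambda>cc. int (moved_positions b ! cc) + 1) ` {..<length (moved_positions b)}"
      using bij_abs_index length_moved_b by (simp add: bij_betw_def)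
    also have "\<dots> = (\<lambda>v. int v + 1) ` set (moved_positions b)"
      by (rule image_moved_positions)
    finally show ?thesis .
  qed
  have "red (map (relabel b) s) ! j = sgn (relabel b (s ! j)) * int (Suc (abs_index j))"
    unfolding red_def using j length_s S abs_relabel_s[OF j]
      card_moved_positions_le[of "abs_index j" b] abs_index_less[OF j] length_moved_b
    by simp
  also have "\<dots> = s ! j" using abs_s_eq[OF j] relabel_s[OF j] s_nonzero[OF j]
    by (auto simp: sgn_if)
  finally show "red (map (relabel b) s) ! j = s ! j" .
qed

lemma dp_pi: "dp \<pi> = s"
  unfolding dp_eq_red_filter moved_indices_pi map_pi_moved_positions red_map_relabel ..

end

lemma Bn_abs_bounds: "q \<in> Bn n \<Longrightarrow> i < n \<Longrightarrow> 1 \<le> \<bar>q ! i\<bar> \<and> \<bar>q ! i\<bar> \<le> int n"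
  using nth_mem[of i "map abs q"] by (auto simp: Bn_def)

lemma Bn_abs_inj: "q \<in> Bn n \<Longrightarrow> i < n \<Longrightarrow> i' < n \<Longrightarrow> \<bar>q ! i\<bar> = \<bar>q ! i'\<bar> \<Longrightarrow> i = i'"
  by (auto simp: Bn_def distinct_conv_nth)

lemma length_fixed_pattern [simp]: "length (fixed_pattern w) = length w"
  by (simp add: fixed_pattern_def)

lemma fixed_pattern_nth: "i < length w \<Longrightarrow> fixed_pattern w ! i \<longleftrightarrow> w ! i = int i + 1"
  by (simp add: fixed_pattern_def)

lemma dp_eq_red_moved: "dp w = red (map (nth w) (moved_positions (fixed_pattern w)))"
proof -
  have "filter (\<lambda>i. w ! i \<noteq> int i + 1) [0..<length w] = moved_positions (fixed_pattern w)"
    unfolding moved_positions_def by (intro filter_cong) (auto simp: fixed_pattern_nth)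
  then show ?thesis
    by (simp add: dp_eq_red_filter)
qed

text \<open>A letter of \<open>q\<close> off its fixed-point position never has the absolute value of a fixed
  point, so it lands on a moved position.\<close>

lemma Bn_abs_moved:
  assumes q: "q \<in> Bn n" and i: "i < n" "\<not> fixed_pattern q ! i"
  shows "nat \<bar>q ! i\<bar> - 1 \<in> set (moved_positions (fixed_pattern q))"
proof -
  define v where "v = nat \<bar>q ! i\<bar> - 1"
  have len: "length q = n"
    using q by (simp add: Bn_def)
  have v: "v < n" "int v + 1 = \<bar>q ! i\<bar>"
    using Bn_abs_bounds[OF q i(1)] int_nat_diff_one[of "\<bar>q ! i\<bar>"] unfolding v_def by auto
  have "\<not> fixed_pattern q ! v"
  proof
    assume "fixed_pattern q ! v"
    then have "\<bar>q ! v\<bar> = \<bar>q ! i\<bar>"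
      using v len by (simp add: fixed_pattern_nth)
    then show False
      using Bn_abs_inj[OF q v(1) i(1)] i(2) \<open>fixed_pattern q ! v\<close> by simp
  qed
  then show ?thesis
    using v len by (simp add: set_moved_positions v_def)
qed

lemma Bn_abs_moved_letters:
  assumes q: "q \<in> Bn n"
  shows "set (map abs (map (nth q) (moved_positions (fixed_pattern q))))
           = (\<lambda>v. int v + 1) ` set (moved_positions (fixed_pattern q))" (is "?L = ?R")
proof (rule card_subset_eq)
  define b where "b = fixed_pattern q"
  have len: "length b = n"
    using q by (simp add: Bn_def b_def)
  show "finite ?R" by simp
  show "?L \<subseteq> ?R"
  proof
    fix y assume "y \<in> ?L"
    then obtain i where i: "i \<in> set (moved_positions b)" "y = \<bar>q ! i\<bar>"
      by (auto simp: b_def)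
    then have "i < n" "\<not> b ! i"
      using len by (auto simp: set_moved_positions)
    then have "nat y - 1 \<in> set (moved_positions b)" "int (nat y - 1) + 1 = y"
      using Bn_abs_moved[OF q] Bn_abs_bounds[OF q] int_nat_diff_one[of "\<bar>q ! i\<bar>"] i(2)
      by (auto simp: b_def)
    then show "y \<in> ?R"
      unfolding b_def by (metis image_eqI)
  qed
  have "inj_on (\<lambda>i. \<bar>q ! i\<bar>) (set (moved_positions b))"
    using Bn_abs_inj[OF q] len by (auto simp: inj_on_def set_moved_positions)
  then have "card ?L = length (moved_positions b)"
    by (simp add: card_image distinct_card distinct_moved_positions b_def)
  also have "\<dots> = card ?R"
    by (simp add: card_image distinct_card distinct_moved_positions inj_on_def b_def)
  finally show "card ?L = card ?R" .
qed

lemma fixed_pattern_in_fixed_patterns: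
  assumes "s \<in> DB k" "k \<le> n" "q \<in> Bn n" "dp q = s"
  shows "fixed_pattern q \<in> fixed_patterns k (n - k)"
proof -
  have "length (moved_positions (fixed_pattern q)) = length s"
    using arg_cong[OF assms(4), of length] by (simp add: dp_eq_red_moved red_def)
  then show ?thesis
    using assms by (auto simp: fixed_patterns_def length_moved_positions DB_def Bn_def)
qed

context inflation
begin

lemma relabel_eq_if_dp:
  assumes q: "q \<in> Bn n" and b: "fixed_pattern q = b" and dq: "dp q = s" and j: "j < k"
  shows "relabel b (s ! j) = q ! (moved_positions b ! j)"
proof -
  define i where "i = moved_positions b ! j"
  have i: "i < n" "\<not> b ! i"
    using moved_positions_nth[of j b] j length_moved_b length_b by (simp_all add: i_def)
  have "nat \<bar>q ! i\<bar> - 1 \<in> set (moved_positions b)"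
    using Bn_abs_moved[OF q i(1)] i(2) b by simp
  then obtain c0 where c0: "c0 < k" "moved_positions b ! c0 = nat \<bar>q ! i\<bar> - 1"
    using length_moved_b by (metis in_set_conv_nth)
  have qi: "\<bar>q ! i\<bar> = int (moved_positions b ! c0) + 1"
    using c0(2) Bn_abs_bounds[OF q i(1)] int_nat_diff_one[of "\<bar>q ! i\<bar>"] by simp
  have qj: "map (nth q) (moved_positions b) ! j
    = q ! i" "j < length (map (nth q) (moved_positions b))"
    using j length_moved_b by (simp_all add: i_def)
  have "s ! j = red (map (nth q) (moved_positions b)) ! j"
    using dq b by (simp add: dp_eq_red_moved)
  also have "\<dots> = sgn (q ! i)
    * int (card {y \<in> set (map abs (map (nth q) (moved_positions b))). y \<le> \<bar>q ! i\<bar>})"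
    unfolding red_def using qj by (simp only: nth_map)
  also have "\<dots> = sgn (q ! i)
    * int (card {y \<in> (\<lambda>v. int v + 1) ` set (moved_positions b). y \<le> \<bar>q ! i\<bar>})"
    using Bn_abs_moved_letters[OF q] unfolding b by (simp only:)
  also have "\<dots> = sgn (q ! i) * int (Suc c0)"
    using card_moved_positions_le[of c0 b] c0(1) length_moved_b unfolding qi by simp
  finally have sj: "s ! j = sgn (q ! i) * int (Suc c0)" .
  have "q ! i \<noteq> 0"
    using Bn_abs_bounds[OF q i(1)] by auto
  then have "abs_index j = c0"
    using sj by (simp add: abs_index_def abs_mult abs_sgn_eq)
  then have "relabel b (s ! j) = sgn (s ! j) * (int (moved_positions b ! c0) + 1)"
    unfolding relabel_def abs_index_def by simp
  also have "\<dots> = sgn (q ! i) * \<bar>q ! i\<bar>"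
    using sj qi by (simp add: sgn_mult)
  also have "\<dots> = q ! i"
    by (rule sgn_mult_abs)
  finally show ?thesis
    by (simp add: i_def)
qed

lemma inflate_eq_if_dp:
  assumes q: "q \<in> Bn n" and b: "fixed_pattern q = b" and dq: "dp q = s"
  shows "\<pi> = q"
proof (rule nth_equalityI)
  have len: "length q = n"
    using q by (simp add: Bn_def)
  then show "length \<pi> = length q"
    by (simp add: length_pi)
  fix i assume "i < length \<pi>"
  then have i: "i < n"
    by (simp add: length_pi)
  show "\<pi> ! i = q ! i"
  proof (cases "b ! i")
    case True
    then show ?thesis
      using pi_fixed[OF i] fixed_pattern_nth[of i q] i len b by simp
  next
    case False
    then show ?thesis
      using pi_moved[OF i False] relabel_eq_if_dp[OF q b dq] by simp
  qed
qed

end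

section \<open>Major index of the inflated permutation\<close>

lemma majB_eq_sum: "majB w = (\<Sum>i\<in>{1..<length w}. if precB (w ! i) (w ! (i - 1)) then i else 0)"
proof -
  have "{i. 1 \<le> i \<and> i < length w \<and> precB (w ! i) (w ! (i - 1))}
          = {i \<in> {1..<length w}. precB (w ! i) (w ! (i - 1))}"
    by auto
  then show ?thesis
    unfolding majB_def
    using sum.inter_filter[of "{1..<length w}" "\<lambda>i. i" "\<lambda>i. precB (w ! i) (w ! (i - 1))"]
    by simp
qed

lemma precB_iff_abs:
  "a \<noteq> 0 \<Longrightarrow> b \<noteq> 0 \<Longrightarrow> precB a b \<longleftrightarrow>
     (a < 0 \<and> b > 0) \<or> (a < 0 \<and> b < 0 \<and> \<bar>a\<bar> < \<bar>b\<bar>) \<or> (a > 0 \<and> b > 0 \<and> \<bar>a\<bar> < \<bar>b\<bar>)"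
  unfolding precB_def by auto

definition exc :: "int list \<Rightarrow> nat \<Rightarrow> bool" where
  "exc s j \<longleftrightarrow> j < length s \<and> s ! j > int j + 1"

text \<open>Only the compatibility condition of \<open>maj_gf_compatible\<close> looks at \<open>des_exc s j\<close> for
  the last letter, and it is satisfied by the value \<open>exc s j\<close>.\<close>

definition des_exc :: "int list \<Rightarrow> nat \<Rightarrow> bool" where
  "des_exc s j \<longleftrightarrow> (if Suc j < length s then precB (s ! Suc j) (s ! j) else exc s j)"

lemma exc_des_exc_compatible:
  assumes "s \<in> DB k" and change: "exc s j \<noteq> exc s (Suc j)"
  shows "des_exc s j = exc s j"
proof (cases "Suc j < length s")
  case True
  have "s ! Suc j \<noteq> int (Suc j) + 1" "s ! Suc j \<noteq> 0" "s ! j \<noteq> int j + 1"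
    using assms(1) True nth_mem[of "Suc j" "map abs s"]
    by (auto simp: DB_def Bn_def add.commute)
  then show ?thesis
    using True change unfolding des_exc_def exc_def precB_def by auto
qed (simp add: des_exc_def)

lemma majB_eq_pattern_maj_replicate:
  "majB s = pattern_maj (exc s) (des_exc s) (replicate (length s) False)"
  unfolding majB_eq_sum pattern_maj_def length_replicate
proof (intro sum.cong refl)
  fix i assume "i \<in> {1..<length s}"
  then have i: "1 \<le> i" "i < length s" "Suc (i - 1) = i"
    by auto
  then have "moved_before (replicate (length s) False) (i - 1) = i - 1"
    by (simp add: moved_before_replicate)
  then have "pattern_des (exc s) (des_exc s) (replicate (length s) False) i
    = precB (s ! i) (s ! (i - 1))"
    using i unfolding pattern_des_def by (simp add: des_exc_def)
  then show "(if precB (s ! i) (s ! (i - 1)) then i else 0)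
           = (if pattern_des (exc s) (des_exc s) (replicate (length s) False) i then i else 0)"
    by simp
qed

context inflation
begin

lemma abs_relabel_s_less_iff:
  "j1 < k \<Longrightarrow> j2 < k \<Longrightarrow> \<bar>relabel b (s ! j1)\<bar> < \<bar>relabel b (s ! j2)\<bar> \<longleftrightarrow> \<bar>s ! j1\<bar> < \<bar>s ! j2\<bar>"
proof -
  assume j: "j1 < k" "j2 < k"
  have "\<bar>relabel b (s ! j1)\<bar> < \<bar>relabel b (s ! j2)\<bar>
    \<longleftrightarrow> moved_positions b ! abs_index j1 < moved_positions b ! abs_index j2"
    using abs_relabel_s[OF j(1)] abs_relabel_s[OF j(2)] by auto
  also have "\<dots> \<longleftrightarrow> abs_index j1 < abs_index j2"
    using moved_positions_less_iff[of "abs_index j1" b "abs_index j2"] abs_index_less j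
      length_moved_b by simp
  also have "\<dots> \<longleftrightarrow> \<bar>s ! j1\<bar> < \<bar>s ! j2\<bar>"
    using abs_s_eq[OF j(1)] abs_s_eq[OF j(2)] by auto
  finally show ?thesis .
qed

lemma relabel_s_nonzero: "j < k \<Longrightarrow> relabel b (s ! j) \<noteq> 0"
  using abs_relabel_s by fastforce

lemma relabel_s_neg_iff: "j < k \<Longrightarrow> relabel b (s ! j) < 0 \<longleftrightarrow> s ! j < 0"
  using relabel_s_pos_iff relabel_s_nonzero s_nonzero
  by (meson linorder_neqE_linordered_idom not_less_iff_gr_or_eq)

lemma pi_des_fixed_moved:
  assumes i: "i < n" and ii: "i = Suc i'" and a: "b ! i'" "\<not> b ! i"
  shows "precB (\<pi> ! i) (\<pi> ! i') \<longleftrightarrow> pattern_des (exc s) (des_exc s) b i"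
proof -
  have i': "i' < n" using ii i by simp
  define j where "j = moved_before b i"
  have j: "j < k" "moved_positions b ! j = i" "\<pi> ! i = relabel b (s ! j)"
    using pi_moved[OF i a(2)] j_def by auto
  have pi': "\<pi> ! i' = int i" using pi_fixed[OF i' a(1)] ii by simp
  have des: "pattern_des (exc s) (des_exc s) b i = (\<not> exc s j)"
    unfolding pattern_des_def using a ii j_def by simp
  have "precB (relabel b (s ! j)) (int i) \<longleftrightarrow> \<not> (s ! j > int j + 1)"
  proof (cases "s ! j > 0")
    case False
    then have "s ! j < 0" using s_nonzero[OF j(1)] by simp
    then show ?thesis using relabel_s_neg_iff[OF j(1)] ii unfolding precB_def by auto
  next
    case True
    have pv: "relabel b (s ! j) = int (moved_positions b ! abs_index j) + 1"
      using relabel_s[OF j(1)] True by simp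
    have sv: "s ! j = int (abs_index j) + 1" using abs_s_eq[OF j(1)] True by simp
    have cne: "abs_index j \<noteq> j" using s_not_fixed[OF j(1)] sv by auto
    have nfc: "moved_positions b ! abs_index j \<noteq> i'"
      using moved_positions_nth[of "abs_index j" b] abs_index_less[OF j(1)] length_moved_b a(1)
        by auto
    have "abs_index j < j \<longleftrightarrow> moved_positions b ! abs_index j < i"
      using moved_positions_less_iff[of "abs_index j" b j] abs_index_less[OF j(1)] j
        length_moved_b by simp
    then show ?thesis unfolding pv precB_def using sv cne nfc ii by auto
  qed
  then show ?thesis using des j pi' by (simp add: exc_def length_s)
qed

lemma pi_des_moved_fixed:
  assumes i: "i < n" and ii: "i = Suc i'" and a: "\<not> b ! i'" "b ! i"
  shows "precB (\<pi> ! i) (\<pi> ! i') \<longleftrightarrow> pattern_des (exc s) (des_exc s) b i"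
proof -
  have i': "i' < n" using ii i by simp
  define j where "j = moved_before b i'"
  have j: "j < k" "moved_positions b ! j = i'" "\<pi> ! i' = relabel b (s ! j)"
    using pi_moved[OF i' a(1)] j_def by auto
  have pi: "\<pi> ! i = int i + 1" using pi_fixed[OF i a(2)] by simp
  have des: "pattern_des (exc s) (des_exc s) b i = exc s j"
    unfolding pattern_des_def using a ii j_def by simp
  have "precB (int i + 1) (relabel b (s ! j)) \<longleftrightarrow> (s ! j > int j + 1)"
  proof (cases "s ! j > 0")
    case False
    then have "s ! j < 0" using s_nonzero[OF j(1)] by simp
    then show ?thesis using relabel_s_neg_iff[OF j(1)] unfolding precB_def by auto
  next
    case True
    have pv: "relabel b (s ! j) = int (moved_positions b ! abs_index j) + 1"
      using relabel_s[OF j(1)] True by simp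
    have sv: "s ! j = int (abs_index j) + 1" using abs_s_eq[OF j(1)] True by simp
    have nfc: "moved_positions b ! abs_index j \<noteq> i"
      using moved_positions_nth[of "abs_index j" b] abs_index_less[OF j(1)] length_moved_b a(2)
        by auto
    have "j < abs_index j \<longleftrightarrow> i' < moved_positions b ! abs_index j"
      using moved_positions_less_iff[of j b "abs_index j"] abs_index_less[OF j(1)] j
        length_moved_b by simp
    then show ?thesis unfolding pv precB_def using sv nfc ii by auto
  qed
  then show ?thesis using des j pi by (simp add: exc_def length_s)
qed

lemma pi_des_moved_moved:
  assumes i: "i < n" and ii: "i = Suc i'" and a: "\<not> b ! i'" "\<not> b ! i"
  shows "precB (\<pi> ! i) (\<pi> ! i') \<longleftrightarrow> pattern_des (exc s) (des_exc s) b i"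
proof -
  have i': "i' < n" using ii i by simp
  define j where "j = moved_before b i'"
  have j: "j < k" "moved_positions b ! j = i'" "\<pi> ! i' = relabel b (s ! j)"
    using pi_moved[OF i' a(1)] j_def by auto
  have j1: "moved_before b i = Suc j" using moved_before_Suc[of b i'] ii a j_def by simp
  have j2: "Suc j < k" "\<pi> ! i = relabel b (s ! Suc j)" using pi_moved[OF i a(2)] j1 by auto
  have des: "pattern_des (exc s) (des_exc s) b i = precB (s ! Suc j) (s ! j)"
    unfolding pattern_des_def using a ii j_def j1 j2
    by (simp add: des_exc_def length_s)
  have "precB (relabel b (s ! Suc j)) (relabel b (s ! j)) \<longleftrightarrow> precB (s ! Suc j) (s ! j)"
    using precB_iff_abs[OF relabel_s_nonzero[OF j2(1)] relabel_s_nonzero[OF j(1)]]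
      precB_iff_abs[OF s_nonzero[OF j2(1)] s_nonzero[OF j(1)]]
      relabel_s_neg_iff[OF j(1)] relabel_s_neg_iff[OF j2(1)]
      relabel_s_pos_iff[OF j(1)] relabel_s_pos_iff[OF j2(1)] abs_relabel_s_less_iff[OF j2(1) j(1)]
    by (simp only:)
  then show ?thesis using des j j2 by simp
qed

lemma pi_des_fixed_fixed:
  assumes i: "i < n" and ii: "i = Suc i'" and a: "b ! i'" "b ! i"
  shows "precB (\<pi> ! i) (\<pi> ! i') \<longleftrightarrow> pattern_des (exc s) (des_exc s) b i"
proof -
  have i': "i' < n" using ii i by simp
  have "\<pi> ! i' = int i' + 1" "\<pi> ! i = int i + 1"
    using pi_fixed[OF i' a(1)] pi_fixed[OF i a(2)] by auto
  moreover have "pattern_des (exc s) (des_exc s) b i = False"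
    unfolding pattern_des_def using a ii by simp
  ultimately show ?thesis using ii unfolding precB_def by simp
qed

lemma pi_des_iff_pattern_des:
  assumes "1 \<le> i" and i: "i < n"
  shows "precB (\<pi> ! i) (\<pi> ! (i - 1)) \<longleftrightarrow> pattern_des (exc s) (des_exc s) b i"
proof -
  obtain i' where ii: "i = Suc i'"
    using \<open>1 \<le> i\<close> by (cases i) auto
  then show ?thesis
    using pi_des_fixed_fixed[OF i ii] pi_des_fixed_moved[OF i ii] pi_des_moved_fixed[OF i ii]
      pi_des_moved_moved[OF i ii]
    by (cases "b ! i'"; cases "b ! i") simp_all
qed

lemma majB_pi: "majB \<pi> = pattern_maj (exc s) (des_exc s) b"
  unfolding majB_eq_sum pattern_maj_def length_pi length_b using pi_des_iff_pattern_des
  by (intro sum.cong) auto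

end

section \<open>Length parity and negative letters\<close>

lemma card_filter_eq_sum: "finite A \<Longrightarrow> card {x \<in> A. Q x} = (\<Sum>x\<in>A. if Q x then 1 else 0)"
  by (simp add: sum.inter_filter[symmetric])

lemma card_pairs_eq_sum:
  "card {(i, j). i < j \<and> j < (m::nat) \<and> P i j} = (\<Sum>i<m. \<Sum>j<m. if i < j \<and> P i j then 1 else 0)"
proof -
  have "{(i, j). i < j \<and> j < m \<and> P i j} = Sigma {..<m} (\<lambda>i. {j \<in> {..<m}. i < j \<and> P i j})"
    by auto
  then have "card {(i, j). i < j \<and> j < m \<and> P i j} = (\<Sum>i<m. card {j \<in> {..<m}. i < j \<and> P i j})"
    by (simp add: card_SigmaI)
  also have "\<dots> = (\<Sum>i<m. \<Sum>j<m. if i < j \<and> P i j then 1 else 0)"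
    by (intro sum.cong refl card_filter_eq_sum) simp
  finally show ?thesis .
qed

lemma inv_eq_sum: "inv w = (\<Sum>i<length w. \<Sum>j<length w. if i < j \<and> w ! i > w ! j then 1 else 0)"
  unfolding inv_def by (rule card_pairs_eq_sum)

lemma int_less_iff_abs:
  "a \<noteq> 0 \<Longrightarrow> b \<noteq> 0 \<Longrightarrow> (a::int) > b \<longleftrightarrow> (a > 0 \<and> b < 0) \<or> (a > 0 \<and> b > 0 \<and> \<bar>b\<bar> < \<bar>a\<bar>)
    \<or> (a < 0 \<and> b < 0 \<and> \<bar>a\<bar> < \<bar>b\<bar>)"
  by auto

definition neg_abs_sum :: "int list \<Rightarrow> nat" where
  "neg_abs_sum w = (\<Sum>i\<in>{i. i < length w \<and> w ! i < 0}. nat (- (w ! i)))"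

lemma neg_abs_sum_eq_sum: "neg_abs_sum w = (\<Sum>i<length w. if w ! i < 0 then nat (- (w ! i)) else 0)"
proof -
  have "{i. i < length w \<and> w ! i < 0} = {i \<in> {..<length w}. w ! i < 0}" by auto
  then show ?thesis
    unfolding neg_abs_sum_def
    using sum.inter_filter[of "{..<length w}" "\<lambda>i. nat (- (w ! i))" "\<lambda>i. w ! i < 0"] by simp
qed

lemma ellB_eq_inv_add: "ellB w = inv w + neg_abs_sum w" unfolding ellB_def neg_abs_sum_def ..

lemma moved_before_eq_card: "moved_before b i = card {x. x < i \<and> \<not> b ! x}"
  unfolding moved_before_def by (subst length_filter_conv_card) (auto intro: arg_cong[where f=card])

context inflation
begin

definition fixed_set where "fixed_set = {i. i < n \<and> b ! i}"

lemma finite_fixed_set: "finite fixed_set" by (simp add: fixed_set_def)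

lemma lessThan_n_partition:
  "{..<n} = fixed_set \<union> set (moved_positions b)" "fixed_set \<inter> set (moved_positions b) = {}"
  using set_moved_positions[of b] length_b by (auto simp: fixed_set_def)

lemma sum_set_moved_positions:
  "(\<Sum>i\<in>set (moved_positions b). g i) = (\<Sum>j<k. g (moved_positions b ! j))"
proof -
  have "set (moved_positions b) = (nth (moved_positions b)) ` {..<k}"
    using nth_image[of k "moved_positions b"] length_moved_b by (simp add: atLeast0LessThan)
  moreover have "inj_on (nth (moved_positions b)) {..<k}"
    using moved_positions_eq_iff[of _ b] length_moved_b by (auto simp: inj_on_def)
  ultimately show ?thesis by (simp add: sum.reindex)
qed

lemma sum_lessThan_n_split: "(\<Sum>i<n. g i) = (\<Sum>i\<in>fixed_set. g i) + (\<Sum>j<k. g (moved_positions b ! j))"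
  unfolding lessThan_n_partition(1) sum_set_moved_positions[symmetric]
  by (rule sum.union_disjoint) (auto simp: finite_fixed_set lessThan_n_partition(2))

lemma relabel_s_less_iff:
  "j1 < k \<Longrightarrow> j2 < k \<Longrightarrow> relabel b (s ! j1) > relabel b (s ! j2) \<longleftrightarrow> s ! j1 > s ! j2"
  using int_less_iff_abs[OF relabel_s_nonzero relabel_s_nonzero, of j1 j2]
    int_less_iff_abs[OF s_nonzero s_nonzero, of j1 j2]
    relabel_s_neg_iff[of j1] relabel_s_neg_iff[of j2] relabel_s_pos_iff[of j1] relabel_s_pos_iff[of j2]
    abs_relabel_s_less_iff[of j1 j2] abs_relabel_s_less_iff[of j2 j1]
  by (simp only:)

lemma moved_pairs_inv:
  "(\<Sum>j<k. \<Sum>j'<k. if moved_positions b ! j < moved_positions b ! j'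
    \<and> \<pi> ! (moved_positions b ! j) > \<pi> ! (moved_positions b ! j') then 1 else (0::nat)) = inv s"
  unfolding inv_eq_sum length_s
  by (intro sum.cong refl)
    (simp add: pi_moved_positions relabel_s_less_iff moved_positions_less_iff length_moved_b)

definition inv_ind :: "nat \<Rightarrow> nat \<Rightarrow> nat" where
  "inv_ind i i' = (if i < i' \<and> \<pi> ! i > \<pi> ! i' then 1 else 0)"

lemma inv_pi_split:
  "inv \<pi> = (\<Sum>f\<in>fixed_set. \<Sum>j'<k. inv_ind f (moved_positions b ! j'))
    + (\<Sum>j<k. \<Sum>f\<in>fixed_set. inv_ind (moved_positions b ! j) f) + inv s"
proof -
  have FF: "(\<Sum>f\<in>fixed_set. \<Sum>f'\<in>fixed_set. inv_ind f f') = 0"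
  proof -
    { fix f f' assume "f \<in> fixed_set" "f' \<in> fixed_set"
      then have "inv_ind f f' = 0" using pi_fixed by (auto simp: fixed_set_def inv_ind_def) }
    then show ?thesis by simp
  qed
  have "inv \<pi> = (\<Sum>i<n. \<Sum>i'<n. inv_ind i i')"
    unfolding inv_eq_sum length_pi inv_ind_def ..
  also have "\<dots>
    = (\<Sum>i<n. (\<Sum>i'\<in>fixed_set. inv_ind i i') + (\<Sum>j'<k. inv_ind i (moved_positions b ! j')))"
    by (intro sum.cong refl sum_lessThan_n_split)
  also have "\<dots>
    = (\<Sum>i\<in>fixed_set. (\<Sum>i'\<in>fixed_set. inv_ind i i') + (\<Sum>j'<k. inv_ind i (moved_positions b ! j')))
      + (\<Sum>j<k. (\<Sum>i'\<in>fixed_set. inv_ind (moved_positions b ! j) i')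
                + (\<Sum>j'<k. inv_ind (moved_positions b ! j) (moved_positions b ! j')))"
    by (rule sum_lessThan_n_split)
  also have "\<dots> = (\<Sum>f\<in>fixed_set. \<Sum>j'<k. inv_ind f (moved_positions b ! j'))
      + (\<Sum>j<k. \<Sum>f\<in>fixed_set. inv_ind (moved_positions b ! j) f)
      + (\<Sum>j<k. \<Sum>j'<k. inv_ind (moved_positions b ! j) (moved_positions b ! j'))"
    using FF by (simp add: sum.distrib)
  also have "(\<Sum>j<k. \<Sum>j'<k. inv_ind (moved_positions b ! j) (moved_positions b ! j')) = inv s"
    unfolding inv_ind_def by (rule moved_pairs_inv)
  finally show ?thesis .
qed

lemma moved_positions_eq_add_card:
  "j < k \<Longrightarrow> moved_positions b ! j = j + card {f \<in> fixed_set. f < moved_positions b ! j}"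
proof -
  assume j: "j < k"
  have lt: "moved_positions b ! j < n"
    using moved_positions_nth[of j b] length_moved_b length_b j by simp
  have "{..<moved_positions b ! j}
    = {f \<in> fixed_set. f < moved_positions b ! j} \<union> {x. x < moved_positions b ! j \<and> \<not> b ! x}"
    using lt by (auto simp: fixed_set_def)
  then have "card {..<moved_positions b ! j} = card {f \<in> fixed_set. f < moved_positions b ! j}
    + card {x. x < moved_positions b ! j \<and> \<not> b ! x}"
    by (rule ssubst) (rule card_Un_disjoint, auto simp: fixed_set_def)
  moreover have "card {x. x < moved_positions b ! j \<and> \<not> b ! x} = j"
    using moved_before_eq_card[of b "moved_positions b ! j"] moved_before_moved_positions[of j b]
      j length_moved_b by simp
  ultimately show ?thesis by simp
qed

lemma neg_abs_sum_pi_moved: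
  "neg_abs_sum \<pi> = (\<Sum>j<k. if s ! j < 0 then moved_positions b ! abs_index j + 1 else 0)"
proof -
  have "neg_abs_sum \<pi> = (\<Sum>i\<in>fixed_set. if \<pi> ! i < 0 then nat (- (\<pi> ! i)) else 0)
    + (\<Sum>j<k. if \<pi> ! (moved_positions b ! j) < 0 then nat (- (\<pi> ! (moved_positions b ! j))) else 0)"
    unfolding neg_abs_sum_eq_sum length_pi by (rule sum_lessThan_n_split)
  also have "(\<Sum>i\<in>fixed_set. if \<pi> ! i < 0 then nat (- (\<pi> ! i)) else 0) = 0"
    using pi_fixed by (auto simp: fixed_set_def intro!: sum.neutral)
  also have "(\<Sum>j<k. if \<pi> ! (moved_positions b ! j) < 0 then nat (- (\<pi> ! (moved_positions b ! j))) else 0)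
      = (\<Sum>j<k. if s ! j < 0 then moved_positions b ! abs_index j + 1 else 0)"
  proof (intro sum.cong refl)
    fix j assume j: "j \<in> {..<k}"
    then have j': "j < k" by simp
    show "(if \<pi> ! (moved_positions b ! j) < 0 then nat (- (\<pi> ! (moved_positions b ! j))) else 0)
        = (if s ! j < 0 then moved_positions b ! abs_index j + 1 else 0)"
      using pi_moved_positions[OF j'] relabel_s_neg_iff[OF j'] relabel_s[OF j'] s_nonzero[OF j']
      by auto
  qed
  finally show ?thesis by simp
qed

lemma neg_abs_sum_s: "neg_abs_sum s = (\<Sum>j<k. if s ! j < 0 then abs_index j + 1 else 0)"
  unfolding neg_abs_sum_eq_sum length_s
proof (intro sum.cong refl)
  fix j assume "j \<in> {..<k}"
  then have j': "j < k" by simp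
  show "(if s ! j < 0 then nat (- (s ! j)) else 0) = (if s ! j < 0 then abs_index j + 1 else 0)"
    using abs_s_eq[OF j'] by auto
qed

lemma neg_abs_sum_pi:
  "neg_abs_sum \<pi> = neg_abs_sum s
     + (\<Sum>j<k. \<Sum>f\<in>fixed_set. if s ! j < 0 \<and> f < moved_positions b ! abs_index j then 1 else 0)"
proof -
  have "neg_abs_sum \<pi> = (\<Sum>j<k. (if s ! j < 0 then abs_index j + 1 else 0)
      + (\<Sum>f\<in>fixed_set. if s ! j < 0 \<and> f < moved_positions b ! abs_index j then 1 else 0))"
    unfolding neg_abs_sum_pi_moved
  proof (intro sum.cong refl)
    fix j assume "j \<in> {..<k}"
    then have j: "j < k" by simp
    have "moved_positions b ! abs_index j = abs_index j
      + card {f \<in> fixed_set. f < moved_positions b ! abs_index j}"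
      using moved_positions_eq_add_card[OF abs_index_less[OF j]] .
    moreover have "card {f \<in> fixed_set. f < moved_positions b ! abs_index j}
        = (\<Sum>f\<in>fixed_set. if f < moved_positions b ! abs_index j then 1 else 0)"
      by (rule card_filter_eq_sum[OF finite_fixed_set])
    ultimately show "(if s ! j < 0 then moved_positions b ! abs_index j + 1 else 0)
        = (if s ! j < 0 then abs_index j + 1 else 0)
          + (\<Sum>f\<in>fixed_set. if s ! j < 0 \<and> f < moved_positions b ! abs_index j then 1 else 0)"
      by simp
  qed
  then show ?thesis
    unfolding neg_abs_sum_s by (simp add: sum.distrib)
qed

text \<open>The fixed point \<open>f\<close> and the moved letter \<open>\<pi> ! p\<close>, \<open>p = moved_positions b ! j\<close>, of absolute value
  \<open>p' + 1\<close> contribute the first three terms to \<open>ellB \<pi> - ellB s\<close>. The last two terms have the same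
  sum over all pairs, since \<open>abs_index\<close> is a bijection, so the difference is even.\<close>

lemma fixed_moved_pair_parity:
  assumes j: "j < k" and f: "f \<in> fixed_set"
  shows "even (inv_ind (moved_positions b ! j) f + inv_ind f (moved_positions b ! j)
    + (if s ! j < 0 \<and> f < moved_positions b ! abs_index j then 1 else 0)
    + (if f < moved_positions b ! j then 1 else 0)
    + (if f < moved_positions b ! abs_index j then 1 else 0))"
proof -
  have fn: "f < n" "b ! f" using f by (auto simp: fixed_set_def)
  have pf: "\<pi> ! f = int f + 1" using pi_fixed fn by simp
  have pj: "\<pi> ! (moved_positions b ! j) = relabel b (s ! j)" using pi_moved_positions[OF j] .
  have ne1: "f \<noteq> moved_positions b ! j"
    using moved_positions_nth[of j b] length_moved_b j fn by auto
  have ne2: "f \<noteq> moved_positions b ! abs_index j"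
    using moved_positions_nth[of "abs_index j" b] length_moved_b abs_index_less[OF j] fn by auto
  show ?thesis
  proof (cases "s ! j > 0")
    case True
    then have ph: "relabel b (s ! j) = int (moved_positions b ! abs_index j) + 1"
      using relabel_s[OF j] by simp
    show ?thesis using ne1 ne2 True unfolding inv_ind_def pf pj ph
      by (cases "f < moved_positions b ! j"; cases "f < moved_positions b ! abs_index j") auto
  next
    case False
    then have neg: "s ! j < 0" using s_nonzero[OF j] by simp
    then have ph: "relabel b (s ! j) = - (int (moved_positions b ! abs_index j) + 1)"
      using relabel_s[OF j] by simp
    show ?thesis using ne1 ne2 neg unfolding inv_ind_def pf pj ph
      by (cases "f < moved_positions b ! j"; cases "f < moved_positions b ! abs_index j") auto
  qed
qed

lemma ellB_pi_parity: "even (ellB \<pi> + ellB s)"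
proof -
  define NF where "NF = (\<Sum>j<k. \<Sum>f\<in>fixed_set. inv_ind (moved_positions b ! j) f)"
  define FN where "FN = (\<Sum>j<k. \<Sum>f\<in>fixed_set. inv_ind f (moved_positions b ! j))"
  define NG where
    "NG = (\<Sum>j<k. \<Sum>f\<in>fixed_set. if s ! j < 0 \<and> f < moved_positions b ! abs_index j then 1 else (0::nat))"
  define R where "R = (\<Sum>j<k. \<Sum>f\<in>fixed_set. if f < moved_positions b ! j then 1 else (0::nat))"
  define R' where
    "R' = (\<Sum>j<k. \<Sum>f\<in>fixed_set. if f < moved_positions b ! abs_index j then 1 else (0::nat))"
  have RR: "R' = R" unfolding R'_def R_def
    using sum.reindex_bij_betw[OF bij_abs_index,
        of "\<lambda>c. \<Sum>f\<in>fixed_set. if f < moved_positions b ! c then 1 else (0::nat)"]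
    by simp
  have ip: "inv \<pi> = FN + NF + inv s"
    unfolding inv_pi_split FN_def NF_def by (simp add: sum.swap[of _ fixed_set])
  have tot: "NF + FN + NG + R + R'
    = (\<Sum>j<k. \<Sum>f\<in>fixed_set. inv_ind (moved_positions b ! j) f + inv_ind f (moved_positions b ! j)
        + (if s ! j < 0 \<and> f < moved_positions b ! abs_index j then 1 else 0)
        + (if f < moved_positions b ! j then 1 else 0)
        + (if f < moved_positions b ! abs_index j then 1 else 0))"
    unfolding NF_def FN_def NG_def R_def R'_def by (simp add: sum.distrib)
  have "even (NF + FN + NG + R + R')" unfolding tot
    by (intro dvd_sum) (simp only: lessThan_iff fixed_moved_pair_parity)
  moreover have "NF + FN + NG + R + R' = (NF + FN + NG) + 2 * R" using RR by simp
  ultimately have ev: "even (NF + FN + NG)" by (metis dvd_add_left_iff dvd_triv_left)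
  have "ellB \<pi> + ellB s = (NF + FN + NG) + 2 * (inv s + neg_abs_sum s)"
    unfolding ellB_eq_inv_add ip neg_abs_sum_pi NG_def by simp
  then show ?thesis using ev by simp
qed

lemma neg_one_power_ellB_pi: "(-1 :: 'a::ring_1) ^ ellB \<pi> = (-1) ^ ellB s"
proof -
  have "even (ellB \<pi> + ellB s)" by (rule ellB_pi_parity)
  then show ?thesis by (cases "even (ellB s)") (auto simp: neg_one_even_power neg_one_odd_power)
qed

lemma neg_pi: "neg \<pi> = neg s"
proof -
  have "neg \<pi> = card {i. i < n \<and> \<pi> ! i < 0}"
    unfolding neg_def by (simp add: length_filter_conv_card length_pi)
  also have "{i. i < n \<and> \<pi> ! i < 0} = nth (moved_positions b) ` {j. j < k \<and> s ! j < 0}"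
  proof (intro set_eqI iffI)
    fix i assume "i \<in> {i. i < n \<and> \<pi> ! i < 0}"
    then have i: "i < n" "\<pi> ! i < 0" by auto
    then have nb: "\<not> b ! i" using pi_fixed by force
    then show "i \<in> nth (moved_positions b) ` {j. j < k \<and> s ! j < 0}"
      using pi_moved[OF i(1) nb] i relabel_s_neg_iff
      by (auto simp: image_iff intro!: exI[of _ "moved_before b i"])
  next
    fix i assume "i \<in> nth (moved_positions b) ` {j. j < k \<and> s ! j < 0}"
    then obtain j where j: "j < k" "s ! j < 0" "i = moved_positions b ! j" by auto
    then show "i \<in> {i. i < n \<and> \<pi> ! i < 0}"
      using moved_positions_nth[of j b] length_moved_b length_b pi_moved_positions
        relabel_s_neg_iff by auto
  qed
  also have "card \<dots> = card {j. j < k \<and> s ! j < 0}"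
    by (rule card_image)
      (use moved_positions_eq_iff[of _ b] length_moved_b in \<open>auto simp: inj_on_def\<close>)
  also have "\<dots> = neg s" unfolding neg_def by (simp add: length_filter_conv_card length_s)
  finally show ?thesis .
qed

end

section \<open>Summation over the fibre of dp\<close>

lemma (in inflation) sign_fmaj_pi:
  "(- 1) ^ ellB \<pi> * x ^ fmaj \<pi>
     = (- 1) ^ ellB s * x ^ neg s * (x ^ 2) ^ pattern_maj (exc s) (des_exc s) b"
  for x :: "'a::comm_ring_1"
  unfolding fmaj_def majB_pi neg_pi neg_one_power_ellB_pi by (simp add: power_add power_mult)

lemma inflation_iff:
  "s \<in> DB k \<Longrightarrow> k \<le> n \<Longrightarrow> inflation s k n b \<longleftrightarrow> b \<in> fixed_patterns k (n - k)"
  by (simp add: inflation_def)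

lemma dp_fibre_eq_image:
  assumes "s \<in> DB k" "k \<le> n"
  shows "{\<pi> \<in> Bn n. dp \<pi> = s} = inflate s ` fixed_patterns k (n - k)"
proof (intro set_eqI iffI)
  fix q assume "q \<in> {\<pi> \<in> Bn n. dp \<pi> = s}"
  then have q: "q \<in> Bn n" "dp q = s" by auto
  then have "fixed_pattern q \<in> fixed_patterns k (n - k)"
    using assms fixed_pattern_in_fixed_patterns by blast
  moreover from this have "inflate s (fixed_pattern q) = q"
    using inflation.inflate_eq_if_dp[of s k n "fixed_pattern q" q] q assms inflation_iff by blast
  ultimately show "q \<in> inflate s ` fixed_patterns k (n - k)"
    by (metis image_eqI)
next
  fix q assume "q \<in> inflate s ` fixed_patterns k (n - k)"
  then obtain b where "b \<in> fixed_patterns k (n - k)" "q = inflate s b" by blast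
  then show "q \<in> {\<pi> \<in> Bn n. dp \<pi> = s}"
    using inflation.pi_in_Bn inflation.dp_pi assms inflation_iff by blast
qed

lemma inj_on_inflate:
  assumes "s \<in> DB k" "k \<le> n"
  shows "inj_on (inflate s) (fixed_patterns k (n - k))"
  by (rule inj_on_inverseI[of _ fixed_pattern])
     (use inflation.fixed_pattern_pi assms inflation_iff in blast)

lemma sum_dp_fibre:
  fixes x :: "'a::comm_ring_1"
  assumes "s \<in> DB k" "k \<le> n"
  shows "(\<Sum>\<pi>\<in>{\<pi> \<in> Bn n. dp \<pi> = s}. (- 1) ^ ellB \<pi> * x ^ fmaj \<pi>)
    = (- 1) ^ ellB s * x ^ neg s
      * (\<Sum>b\<in>fixed_patterns k (n - k). (x ^ 2) ^ pattern_maj (exc s) (des_exc s) b)"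
proof -
  have "(\<Sum>\<pi>\<in>{\<pi> \<in> Bn n. dp \<pi> = s}. (- 1) ^ ellB \<pi> * x ^ fmaj \<pi>)
        = (\<Sum>b\<in>fixed_patterns k (n - k). (- 1) ^ ellB (inflate s b) * x ^ fmaj (inflate s b))"
    using assms by (simp add: dp_fibre_eq_image inj_on_inflate sum.reindex)
  also have "\<dots>
    = (\<Sum>b\<in>fixed_patterns k (n - k).
         (- 1) ^ ellB s * x ^ neg s * (x ^ 2) ^ pattern_maj (exc s) (des_exc s) b)"
    using assms by (intro sum.cong refl inflation.sign_fmaj_pi[of s k n]) (simp add: inflation_iff)
  finally show ?thesis
    by (simp add: sum_distrib_left)
qed

lemma qbinom_X2_eq_gbinom:
  "k \<le> n \<Longrightarrow> qbinom n k (([:0, 1:] :: int poly) ^ 2) = gbinom k (n - k) ([:0, 1:] ^ 2)"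
  using qfact_X2_nonzero by (simp add: qbinom_eq_gbinom)

theorem proposition3p6:
  fixes n k :: nat and \<sigma> :: "int list"
  assumes "k \<le> n" and "\<sigma> \<in> DB k"
  shows "(\<Sum>\<pi>\<in>{\<pi> \<in> Bn n. dp \<pi> = \<sigma>}. (-1) ^ ellB \<pi> * [:0, 1:] ^ fmaj \<pi>)
         = (-1) ^ ellB \<sigma> * [:0, 1:] ^ fmaj \<sigma> * qbinom n k (([:0, 1:] :: int poly) ^ 2)"
proof -
  define X :: "int poly" where "X = [:0, 1:]"
  interpret maj_gf_compatible "X ^ 2" "exc \<sigma>" "des_exc \<sigma>"
    using qfact_X2_nonzero exc_des_exc_compatible[OF assms(2)]
    by unfold_locales (simp_all add: X_def)
  have "length \<sigma> = k"
    using assms(2) by (simp add: DB_def Bn_def)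
  then have "(\<Sum>b\<in>fixed_patterns k (n - k). (X ^ 2) ^ pattern_maj (exc \<sigma>) (des_exc \<sigma>) b)
               = (X ^ 2) ^ majB \<sigma> * gbinom k (n - k) (X ^ 2)"
    by (simp add: sum_pattern_maj majB_eq_pattern_maj_replicate)
  also have "\<dots> = X ^ (2 * majB \<sigma>) * qbinom n k (X ^ 2)"
    using assms(1) by (simp add: qbinom_X2_eq_gbinom X_def power_mult)
  finally show ?thesis
    using sum_dp_fibre[OF assms(2,1), of X] by (simp add: X_def fmaj_def power_add mult_ac)
qed

end
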